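(* Let $K_{n_1,n_2,n_3}$ be the complete tripartite graph with parts $V_1,V_2,V_3$ and vertex set $V=V_1\cup V_2\cup V_3$, where $n_i=|V_i|\ge 2$ for $i=1,2,3$. Then the diameter of the 1-skeleton of $\mathrm{CUT}(K_{n_1,n_2,n_3})$ equals $2$.
   Context: For an undirected graph $G=(V,E)$ and $S\subseteq V$, $\delta(S)\subseteq E$ denotes the set of edges with exactly one endpoint in $S$, and $\mathbf v(S)\in\{0,1\}^{E}$ is its incidence vector ($v(S)_e=1$ iff $e\in\delta(S)$). The cut polytope is $\mathrm{CUT}(G)=\operatorname{conv}\{\mathbf v(S):S\subseteq V\}\subset\mathbb R^{E}$. The 1-skeleton of a polytope is the graph whose vertices are the polytope's vertices and whose edges are its one-dimensional faces; the diameter is the maximum shortest-path edge distance between two vertices of this graph. *)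

theory Defs
  imports "HOL-Analysis.Analysis" "HOL-Library.Extended_Nat"
begin

definition tripartite_edges :: "'v set \<Rightarrow> 'v set \<Rightarrow> 'v set \<Rightarrow> 'v set set" where
  "tripartite_edges V1 V2 V3 =
     {{u, w} | u w. (u \<in> V1 \<and> w \<in> V2) \<or> (u \<in> V1 \<and> w \<in> V3) \<or> (u \<in> V2 \<and> w \<in> V3)}"

text \<open>The space R^E is embedded in real ^ ('v set) (coordinates indexed by all
  subsets of the finite vertex type); coordinates outside E are 0.\<close>
definition cut_vector :: "'v set set \<Rightarrow> 'v set \<Rightarrow> real ^ ('v::finite set)" where
  "cut_vector E S = (\<chi> e. if e \<in> E \<and> card (e \<inter> S) = 1 then 1 else 0)"

definition cut_polytope :: "'v set \<Rightarrow> 'v set set \<Rightarrow> (real ^ ('v::finite set)) set" where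
  "cut_polytope V E = convex hull {cut_vector E S | S. S \<subseteq> V}"

definition skel_adj :: "'a::real_vector set \<Rightarrow> 'a \<Rightarrow> 'a \<Rightarrow> bool" where
  "skel_adj P x y \<longleftrightarrow> x \<noteq> y \<and> x extreme_point_of P \<and> y extreme_point_of P
     \<and> closed_segment x y face_of P"

definition skel_walk :: "'a::real_vector set \<Rightarrow> 'a \<Rightarrow> 'a \<Rightarrow> nat \<Rightarrow> bool" where
  "skel_walk P x y k \<longleftrightarrow> (\<exists>p. length p = Suc k \<and> hd p = x \<and> last p = y
     \<and> (\<forall>i<k. skel_adj P (p ! i) (p ! Suc i)))"

text \<open>Shortest-path distance in the 1-skeleton (infinity if no path).\<close>
definition skel_dist :: "'a::real_vector set \<Rightarrow> 'a \<Rightarrow> 'a \<Rightarrow> enat" where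
  "skel_dist P x y = (INF k \<in> {k. skel_walk P x y k}. enat k)"

definition skel_diameter :: "'a::real_vector set \<Rightarrow> enat" where
  "skel_diameter P = (SUP xy \<in> {(x, y). x extreme_point_of P \<and> y extreme_point_of P}.
                         skel_dist P (fst xy) (snd xy))"

end

theory Submission imports Defs begin

text \<open>If the subgraphs induced on \<open>A \<triangle> B\<close> and on its complement are both connected, then
  \<open>\<delta>(A)\<close> and \<open>\<delta>(B)\<close> are the only cut vectors agreeing with \<open>\<delta>(A)\<close> on the edges not crossing
  \<open>A \<triangle> B\<close>; as these agreeing vertices span an exposed face of the 0/1 polytope,
  \<open>[\<delta>(A), \<delta>(B)]\<close> is an edge of \<open>CUT(G)\<close>. In a complete multipartite graph, if one of
  the two induced subgraphs is disconnected, the set lies inside a single part; with at least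
  three parts of size at least two one then picks \<open>T\<close> such that \<open>T\<close>, \<open>T \<triangle> A \<triangle> B\<close> and their
  complements all meet two parts, and \<open>\<delta>(A \<triangle> T)\<close> is a common neighbour of \<open>\<delta>(A)\<close> and \<open>\<delta>(B)\<close>.
  Conversely, for \<open>a, b\<close> in the same part, \<open>\<delta>(\<emptyset>) + \<delta>({a,b}) = \<delta>({a}) + \<delta>({b})\<close>, so the segment from \<open>\<delta>(\<emptyset>)\<close> to \<open>\<delta>({a,b})\<close>
  meets the interior of another segment between vertices and is not an edge.\<close>

lemma face_of_convex_hull_supporting_hyperplane:
  fixes X :: "'a::euclidean_space set"
  assumes fin: "finite X" and le: "\<And>z. z \<in> X \<Longrightarrow> a \<bullet> z \<le> b"
  shows "convex hull {z\<in>X. a \<bullet> z = b} face_of convex hull X"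
proof -
  have sub: "convex hull X \<subseteq> {x. a \<bullet> x \<le> b}"
    by (rule hull_minimal) (use le convex_halfspace_le in auto)
  have F: "convex hull X \<inter> {x. a \<bullet> x = b} face_of convex hull X"
    by (rule face_of_Int_supporting_hyperplane_le) (use sub in auto)
  have "convex hull X \<inter> {x. a \<bullet> x = b} = convex hull {z\<in>X. a \<bullet> z = b}"
  proof
    obtain S' where S': "S' \<subseteq> X" "convex hull X \<inter> {x. a \<bullet> x = b} = convex hull S'"
      using face_of_convex_hull_subset[OF finite_imp_compact[OF fin] F] by blast
    have "S' \<subseteq> {z\<in>X. a \<bullet> z = b}" using S' hull_subset[of S' convex] by blast
    then show "convex hull X \<inter> {x. a \<bullet> x = b} \<subseteq> convex hull {z\<in>X. a \<bullet> z = b}"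
      using S'(2) hull_mono by metis
  next
    have "convex hull {z\<in>X. a \<bullet> z = b} \<subseteq> {x. a \<bullet> x = b}"
      by (rule hull_minimal) (use convex_hyperplane in auto)
    moreover have "convex hull {z\<in>X. a \<bullet> z = b} \<subseteq> convex hull X" by (rule hull_mono) auto
    ultimately show "convex hull {z\<in>X. a \<bullet> z = b} \<subseteq> convex hull X \<inter> {x. a \<bullet> x = b}"
      by blast
  qed
  with F show ?thesis by simp
qed

lemma face_of_convex_hull_agreeing:
  fixes X :: "(real^'n) set"
  assumes fin: "finite X" and zo: "\<And>z i. z \<in> X \<Longrightarrow> z$i = 0 \<or> z$i = 1" and wX: "w \<in> X"
  shows "convex hull {z\<in>X. \<forall>i\<in>C. z$i = w$i} face_of convex hull X"
proof -
  text \<open>On 0/1 points the functional below equals its maximum minus the number of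
    coordinates in \<open>C\<close> where the point disagrees with \<open>w\<close>.\<close>
  define a where "a = (\<chi> i. if i\<in>C then 2*w$i - 1 else 0)"
  define b where "b = (\<Sum>i\<in>C. w$i)"
  define miss where "miss z = (\<Sum>i\<in>C. if z$i = w$i then 0 else 1::real)" for z
  have eq: "a \<bullet> z = b - miss z" if "z \<in> X" for z
  proof -
    have "a \<bullet> z = (\<Sum>i\<in>UNIV. if i\<in>C then (2*w$i - 1) * z$i else 0)"
      unfolding a_def inner_vec_def by (rule sum.cong) auto
    also have "\<dots> = (\<Sum>i\<in>C. (2*w$i - 1) * z$i)"
      by (simp add: sum.If_cases)
    also have "\<dots> = (\<Sum>i\<in>C. w$i - (if z$i = w$i then 0 else 1))"
    proof (rule sum.cong)
      fix i show "(2*w$i - 1) * z$i = w$i - (if z$i = w$i then 0 else 1)"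
        using zo[OF wX, of i] zo[OF that, of i] by auto
    qed simp
    finally show ?thesis by (simp add: b_def miss_def sum_subtractf)
  qed
  have miss_nonneg: "miss z \<ge> 0" for z
    unfolding miss_def by (rule sum_nonneg) auto
  have miss_eq_0: "miss z = 0 \<longleftrightarrow> (\<forall>i\<in>C. z$i = w$i)" for z
    unfolding miss_def by (subst sum_nonneg_eq_0_iff) auto
  have "convex hull {z\<in>X. a \<bullet> z = b} face_of convex hull X"
  proof (rule face_of_convex_hull_supporting_hyperplane[OF fin])
    show "a \<bullet> z \<le> b" if "z \<in> X" for z
      using eq[OF that] miss_nonneg[of z] by linarith
  qed
  moreover have "{z\<in>X. a \<bullet> z = b} = {z\<in>X. \<forall>i\<in>C. z$i = w$i}"
  proof (rule Collect_cong)
    show "(z \<in> X \<and> a \<bullet> z = b) \<longleftrightarrow> (z \<in> X \<and> (\<forall>i\<in>C. z$i = w$i))" for z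
      using eq[of z] miss_eq_0[of z] by (cases "z \<in> X") simp_all
  qed
  ultimately show ?thesis by simp
qed

lemma skel_adj_convex_hull_agreeing:
  fixes X :: "(real^'n) set"
  assumes fin: "finite X" and zo: "\<And>z i. z \<in> X \<Longrightarrow> z$i = 0 \<or> z$i = 1" and xX: "x \<in> X"
    and xy: "x \<noteq> y" and agree: "{z\<in>X. \<forall>i\<in>C. z$i = x$i} = {x, y}"
  shows "skel_adj (convex hull X) x y"
proof -
  have F: "closed_segment x y face_of convex hull X"
    using face_of_convex_hull_agreeing[OF fin zo xX, of C] agree by (simp add: segment_convex_hull)
  have "{x} face_of convex hull X" "{y} face_of convex hull X"
    using face_of_trans[OF _ F] face_of_singleton extreme_point_of_segment by blast+
  then show ?thesis using F xy by (simp add: skel_adj_def face_of_singleton)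
qed

lemma extreme_point_of_zero_one_hull:
  fixes X :: "(real^'n) set"
  assumes fin: "finite X" and zo: "\<And>z i. z \<in> X \<Longrightarrow> z$i = 0 \<or> z$i = 1" and wX: "w \<in> X"
  shows "w extreme_point_of convex hull X"
proof -
  have "{z\<in>X. \<forall>i\<in>UNIV. z$i = w$i} = {w}" using wX by (auto simp: vec_eq_iff)
  then have "{w} face_of convex hull X"
    using face_of_convex_hull_agreeing[OF fin zo wX, of UNIV] by simp
  then show ?thesis by (simp add: face_of_singleton)
qed

lemma zero_one_in_closed_segment:
  fixes x y z :: "real^'n"
  assumes zo: "\<And>i. x$i = 0 \<or> x$i = 1" "\<And>i. y$i = 0 \<or> y$i = 1" "\<And>i. z$i = 0 \<or> z$i = 1"
    and z: "z \<in> closed_segment x y"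
  shows "z = x \<or> z = y"
proof -
  obtain t where t: "0 \<le> t" "t \<le> 1" "z = (1 - t) *\<^sub>R x + t *\<^sub>R y"
    using z unfolding closed_segment_def by blast
  consider "t = 0" | "t = 1" | "0 < t" "t < 1" using t by linarith
  then show ?thesis
  proof cases
    case 3
    text \<open>A strict convex combination of two different bits is not a bit.\<close>
    have "x$i = y$i" for i
      using zo(1)[of i] zo(2)[of i] zo(3)[of i] arg_cong[OF t(3), of "\<lambda>v. v$i"] 3 by auto
    then show ?thesis using t(3) by (simp add: vec_eq_iff algebra_simps)
  qed (use t in auto)
qed

lemma skel_dist_le_walk: "skel_walk P x y k \<Longrightarrow> skel_dist P x y \<le> enat k"
  unfolding skel_dist_def by (rule INF_lower2) auto

lemma skel_walk_refl: "skel_walk P x x 0"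
  unfolding skel_walk_def by (rule exI[of _ "[x]"]) simp

lemma skel_walk_adj: "skel_adj P x y \<Longrightarrow> skel_walk P x y 1"
  unfolding skel_walk_def by (rule exI[of _ "[x, y]"]) simp

lemma skel_walk_adj_adj: "skel_adj P x z \<Longrightarrow> skel_adj P z y \<Longrightarrow> skel_walk P x y 2"
  unfolding skel_walk_def
proof (rule exI[of _ "[x, z, y]"], intro conjI allI impI)
  fix i :: nat assume "skel_adj P x z" "skel_adj P z y" "i < 2"
  then show "skel_adj P ([x, z, y] ! i) ([x, z, y] ! Suc i)"
    by (cases i) (auto simp: less_Suc_eq)
qed auto

lemma skel_dist_ge_2:
  assumes "x \<noteq> y" and "\<not> skel_adj P x y"
  shows "2 \<le> skel_dist P x y"
  unfolding skel_dist_def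
proof (rule INF_greatest)
  fix k assume "k \<in> {k. skel_walk P x y k}"
  then obtain q where q: "length q = Suc k" "hd q = x" "last q = y"
    "\<forall>i<k. skel_adj P (q ! i) (q ! Suc i)" unfolding skel_walk_def by blast
  have "q \<noteq> []" using q(1) by auto
  then have ends: "q ! 0 = x" "q ! k = y" using q by (simp_all add: hd_conv_nth last_conv_nth)
  have "k \<noteq> 0"
  proof
    assume "k = 0"
    then show False using ends assms(1) by simp
  qed
  moreover have "k \<noteq> 1"
  proof
    assume "k = 1"
    then show False using ends assms(2) q(4) by auto
  qed
  ultimately show "2 \<le> enat k" by (simp add: enat_numeral[symmetric])
qed

lemma skel_diameter_eqI:
  assumes "\<And>x y. x extreme_point_of P \<Longrightarrow> y extreme_point_of P \<Longrightarrow> skel_dist P x y \<le> d"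
    and "x extreme_point_of P" "y extreme_point_of P" "skel_dist P x y = d"
  shows "skel_diameter P = d"
  unfolding skel_diameter_def
proof (rule antisym)
  show "(SUP xy\<in>{(x, y). x extreme_point_of P \<and> y extreme_point_of P}.
          skel_dist P (fst xy) (snd xy)) \<le> d"
    using assms(1) by (auto intro!: SUP_least)
  show "d \<le> (SUP xy\<in>{(x, y). x extreme_point_of P \<and> y extreme_point_of P}.
          skel_dist P (fst xy) (snd xy))"
    using assms(2-4) by (intro SUP_upper2[of "(x, y)"]) auto
qed

lemma card_doubleton_Int_eq_1: "u \<noteq> w \<Longrightarrow> card ({u, w} \<inter> S) = 1 \<longleftrightarrow> (u \<in> S \<longleftrightarrow> w \<notin> S)"
  by (cases "u \<in> S"; cases "w \<in> S") auto

lemma cut_vector_zero_one: "cut_vector E S $ e = 0 \<or> cut_vector E S $ e = 1"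
  by (simp add: cut_vector_def)

lemma cut_vector_in_cut_polytope: "S \<subseteq> V \<Longrightarrow> cut_vector E S \<in> cut_polytope V E"
  unfolding cut_polytope_def by (rule hull_inc) blast

lemma finite_cut_vectors: "finite {cut_vector E S | S. S \<subseteq> V}"
proof -
  have "{cut_vector E S | S. S \<subseteq> V} = cut_vector E ` Pow V" by auto
  then show ?thesis by simp
qed

lemma extreme_point_of_cut_polytope:
  "S \<subseteq> V \<Longrightarrow> cut_vector E S extreme_point_of cut_polytope V E"
  unfolding cut_polytope_def
  by (rule extreme_point_of_zero_one_hull[OF finite_cut_vectors]) (use cut_vector_zero_one in auto)

lemma extreme_point_of_cut_polytopeD:
  "x extreme_point_of cut_polytope V E \<Longrightarrow> \<exists>S\<subseteq>V. x = cut_vector E S"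
  unfolding cut_polytope_def using extreme_point_of_convex_hull by blast

lemma cut_vector_complement:
  assumes E: "E \<subseteq> {{u, w} | u w. u \<in> V \<and> w \<in> V \<and> u \<noteq> w}"
  shows "cut_vector E (V - S) = cut_vector E S"
proof -
  have "card (e \<inter> (V - S)) = 1 \<longleftrightarrow> card (e \<inter> S) = 1" if "e \<in> E" for e
  proof -
    obtain u w where "e = {u, w}" "u \<in> V" "w \<in> V" "u \<noteq> w" using E \<open>e \<in> E\<close> by blast
    then show ?thesis
      using card_doubleton_Int_eq_1[of u w S] card_doubleton_Int_eq_1[of u w "V - S"] by auto
  qed
  then show ?thesis by (auto simp: cut_vector_def vec_eq_iff)
qed

lemma cut_vector_neqI:
  assumes "{u, w} \<in> E" "u \<noteq> w" "u \<in> sym_diff A B" "w \<notin> sym_diff A B"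
  shows "cut_vector E A \<noteq> cut_vector E B"
proof -
  have "card ({u, w} \<inter> A) = 1 \<longleftrightarrow> card ({u, w} \<inter> B) \<noteq> 1"
    using assms(3,4) card_doubleton_Int_eq_1[OF assms(2), of A] card_doubleton_Int_eq_1[OF assms(2), of B]
    by blast
  then have "cut_vector E A $ {u, w} \<noteq> cut_vector E B $ {u, w}"
    using assms(1) by (simp add: cut_vector_def)
  then show ?thesis by auto
qed

definition induced_connected :: "'v set set \<Rightarrow> 'v set \<Rightarrow> bool" where
  "induced_connected E X \<longleftrightarrow>
     (\<forall>U. (\<forall>u\<in>X. \<forall>w\<in>X. {u, w} \<in> E \<longrightarrow> (u \<in> U \<longleftrightarrow> w \<in> U)) \<longrightarrow> X \<subseteq> U \<or> X \<inter> U = {})"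

lemma induced_connected_singleton: "induced_connected E {x}"
  unfolding induced_connected_def by auto

lemma induced_connectedD:
  assumes "induced_connected E X"
    and "\<And>u w. u \<in> X \<Longrightarrow> w \<in> X \<Longrightarrow> {u, w} \<in> E \<Longrightarrow> u \<in> U \<longleftrightarrow> w \<in> U"
  shows "X \<subseteq> U \<or> X \<inter> U = {}"
  using assms unfolding induced_connected_def by blast

lemma cut_vector_agreeing_on_uncut_edges:
  assumes E: "E \<subseteq> {{u, w} | u w. u \<in> V \<and> w \<in> V \<and> u \<noteq> w}"
    and sub: "A \<subseteq> V" "B \<subseteq> V" "T \<subseteq> V"
    and conn: "induced_connected E (sym_diff A B)"
      "induced_connected E (V - sym_diff A B)"
    and agree: "\<And>e. e \<in> E \<Longrightarrow> card (e \<inter> sym_diff A B) \<noteq> 1 \<Longrightarrow>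
      card (e \<inter> T) = 1 \<longleftrightarrow> card (e \<inter> A) = 1"
  shows "cut_vector E T = cut_vector E A \<or> cut_vector E T = cut_vector E B"
proof -
  define D where "D = sym_diff A B"
  define U where "U = sym_diff T A"
  have closed: "u \<in> U \<longleftrightarrow> w \<in> U" if "{u, w} \<in> E" "u \<in> D \<longleftrightarrow> w \<in> D" for u w
  proof -
    have "u \<noteq> w" using E that(1) by (auto simp: doubleton_eq_iff)
    then have "card ({u, w} \<inter> D) \<noteq> 1"
      using that(2) card_doubleton_Int_eq_1[OF \<open>u \<noteq> w\<close>, of D] by blast
    then have "card ({u, w} \<inter> T) = 1 \<longleftrightarrow> card ({u, w} \<inter> A) = 1"
      using agree[OF that(1)] unfolding D_def by blast
    then show ?thesis
      using card_doubleton_Int_eq_1[OF \<open>u \<noteq> w\<close>, of T] card_doubleton_Int_eq_1[OF \<open>u \<noteq> w\<close>, of A]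
      unfolding U_def by blast
  qed
  have "D \<subseteq> U \<or> D \<inter> U = {}"
    by (rule induced_connectedD[OF conn(1)[folded D_def]]) (rule closed; simp)
  moreover have "V - D \<subseteq> U \<or> (V - D) \<inter> U = {}"
    by (rule induced_connectedD[OF conn(2)[folded D_def]]) (rule closed; simp)
  moreover have "U \<subseteq> V" "D \<subseteq> V" using sub unfolding U_def D_def by auto
  ultimately have "U = {} \<or> U = V \<or> U = D \<or> U = V - D" by blast
  moreover have "T = sym_diff A U" unfolding U_def by blast
  ultimately have "T = A \<or> T = V - A \<or> T = B \<or> T = V - B"
    using sub unfolding D_def by auto
  then show ?thesis using cut_vector_complement[OF E, of A] cut_vector_complement[OF E, of B] by auto
qed

lemma skel_adj_cut_vectors:
  assumes E: "E \<subseteq> {{u, w} | u w. u \<in> V \<and> w \<in> V \<and> u \<noteq> w}"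
    and sub: "A \<subseteq> V" "B \<subseteq> V" and neq: "cut_vector E A \<noteq> cut_vector E B"
    and conn: "induced_connected E (sym_diff A B)"
      "induced_connected E (V - sym_diff A B)"
  shows "skel_adj (cut_polytope V E) (cut_vector E A) (cut_vector E B)"
proof -
  define D where "D = sym_diff A B"
  define C where "C = {e \<in> E. card (e \<inter> D) \<noteq> 1}"
  define X where "X = {cut_vector E S | S. S \<subseteq> V}"
  have zo: "z $ e = 0 \<or> z $ e = 1" if "z \<in> X" for z e
    using that cut_vector_zero_one unfolding X_def by blast
  have coord_eq: "cut_vector E S $ e = cut_vector E A $ e \<longleftrightarrow>
      (card (e \<inter> S) = 1 \<longleftrightarrow> card (e \<inter> A) = 1)" if "e \<in> E" for S e
    using that by (simp add: cut_vector_def)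
  have B_agrees: "card (e \<inter> B) = 1 \<longleftrightarrow> card (e \<inter> A) = 1" if eC: "e \<in> C" for e
  proof -
    obtain u w where uw: "e = {u, w}" "u \<noteq> w" using E eC unfolding C_def by blast
    show ?thesis
      using eC uw card_doubleton_Int_eq_1[OF uw(2), of A] card_doubleton_Int_eq_1[OF uw(2), of B]
        card_doubleton_Int_eq_1[OF uw(2), of D]
      unfolding C_def D_def by blast
  qed
  have "{z \<in> X. \<forall>e\<in>C. z $ e = cut_vector E A $ e} = {cut_vector E A, cut_vector E B}"
  proof (intro equalityI subsetI)
    fix z assume "z \<in> {z \<in> X. \<forall>e\<in>C. z $ e = cut_vector E A $ e}"
    then obtain T where T: "z = cut_vector E T" "T \<subseteq> V" "\<forall>e\<in>C. z $ e = cut_vector E A $ e"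
      unfolding X_def by blast
    have "cut_vector E T = cut_vector E A \<or> cut_vector E T = cut_vector E B"
    proof (rule cut_vector_agreeing_on_uncut_edges[OF E sub T(2) conn])
      show "card (e \<inter> T) = 1 \<longleftrightarrow> card (e \<inter> A) = 1"
        if "e \<in> E" "card (e \<inter> sym_diff A B) \<noteq> 1" for e
        using that T coord_eq unfolding C_def D_def by blast
    qed
    then show "z \<in> {cut_vector E A, cut_vector E B}" using T(1) by blast
  next
    fix z assume "z \<in> {cut_vector E A, cut_vector E B}"
    moreover have "cut_vector E A \<in> X" "cut_vector E B \<in> X" using sub unfolding X_def by auto
    moreover have "\<forall>e\<in>C. cut_vector E B $ e = cut_vector E A $ e"
      using B_agrees coord_eq unfolding C_def by blast
    ultimately show "z \<in> {z \<in> X. \<forall>e\<in>C. z $ e = cut_vector E A $ e}" by auto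
  qed
  then have "skel_adj (convex hull X) (cut_vector E A) (cut_vector E B)"
    using skel_adj_convex_hull_agreeing[OF finite_cut_vectors[folded X_def] zo _ neq] sub unfolding X_def by blast
  then show ?thesis unfolding cut_polytope_def X_def .
qed

lemma not_skel_adj_cut_vectors:
  assumes E: "E \<subseteq> {{u, w} | u w. u \<in> V \<and> w \<in> V \<and> u \<noteq> w}"
    and edges: "{a, b} \<notin> E" "{a, c} \<in> E" "{b, c} \<in> E"
    and distinct: "a \<noteq> b" "a \<noteq> c" "b \<noteq> c"
  shows "\<not> skel_adj (cut_polytope V E) (cut_vector E {}) (cut_vector E {a, b})"
proof
  let ?P = "cut_polytope V E" and ?v = "cut_vector E"
  assume "skel_adj ?P (?v {}) (?v {a, b})"
  then have F: "closed_segment (?v {}) (?v {a, b}) face_of ?P" unfolding skel_adj_def by blast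
  have sum: "?v {a} + ?v {b} = ?v {} + ?v {a, b}"
  proof (rule vec_eq_iff[THEN iffD2], rule allI)
    fix e
    show "(?v {a} + ?v {b}) $ e = (?v {} + ?v {a, b}) $ e"
    proof (cases "e \<in> E")
      case True
      then obtain u w where uw: "e = {u, w}" "u \<noteq> w" using E by blast
      have "e = {a, b}" if "a \<in> e" "b \<in> e" using that uw distinct(1) by auto
      then have "\<not> (a \<in> e \<and> b \<in> e)" using True edges(1) by blast
      then show ?thesis using True uw
        by (auto simp: cut_vector_def card_doubleton_Int_eq_1[OF uw(2)] simp del: One_nat_def)
    qed (simp add: cut_vector_def)
  qed
  have V: "a \<in> V" "b \<in> V" using E edges(2,3) by (auto simp: doubleton_eq_iff)
  have "?v {a} \<noteq> ?v {b}" by (rule cut_vector_neqI[OF edges(2) distinct(2)]) (use distinct in auto)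
  then have "midpoint (?v {a}) (?v {b}) \<in> open_segment (?v {a}) (?v {b})" by simp
  moreover have "midpoint (?v {a}) (?v {b}) \<in> closed_segment (?v {}) (?v {a, b})"
    using sum unfolding midpoint_def by (metis midpoint_def midpoint_in_closed_segment)
  moreover have "?v {a} \<in> ?P" "?v {b} \<in> ?P" using V by (auto intro: cut_vector_in_cut_polytope)
  ultimately have "?v {a} \<in> closed_segment (?v {}) (?v {a, b})"
    using F unfolding face_of_def by blast
  then have "?v {a} = ?v {} \<or> ?v {a} = ?v {a, b}"
    by (rule zero_one_in_closed_segment[rotated 3]) (rule cut_vector_zero_one)+
  moreover have "?v {a} \<noteq> ?v {}" by (rule cut_vector_neqI[OF edges(2) distinct(2)]) (use distinct in auto)
  moreover have "?v {a} \<noteq> ?v {a, b}" by (rule cut_vector_neqI[OF edges(3) distinct(3)]) (use distinct in auto)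
  ultimately show False by blast
qed

definition multipartite_edges :: "'v set \<Rightarrow> ('v \<Rightarrow> 'l) \<Rightarrow> 'v set set" where
  "multipartite_edges V p = {{u, w} | u w. u \<in> V \<and> w \<in> V \<and> p u \<noteq> p w}"

definition meets_two_parts :: "('v \<Rightarrow> 'l) \<Rightarrow> 'v set \<Rightarrow> bool" where
  "meets_two_parts p X \<longleftrightarrow> (\<exists>a\<in>X. \<exists>b\<in>X. p a \<noteq> p b)"

lemma meets_two_partsI: "a \<in> X \<Longrightarrow> b \<in> X \<Longrightarrow> p a \<noteq> p b \<Longrightarrow> meets_two_parts p X"
  unfolding meets_two_parts_def by blast

locale complete_multipartite =
  fixes V :: "'v::finite set" and p :: "'v \<Rightarrow> 'l"
  assumes three_parts: "3 \<le> card (p ` V)"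
    and part_size: "\<And>v. v \<in> V \<Longrightarrow> 2 \<le> card {w \<in> V. p w = p v}"
begin

abbreviation E :: "'v set set" where "E \<equiv> multipartite_edges V p"

lemma edges_subset: "E \<subseteq> {{u, w} | u w. u \<in> V \<and> w \<in> V \<and> u \<noteq> w}"
  unfolding multipartite_edges_def by auto

lemma doubleton_in_edges_iff: "{u, w} \<in> E \<longleftrightarrow> u \<in> V \<and> w \<in> V \<and> p u \<noteq> p w"
  unfolding multipartite_edges_def by (auto simp: doubleton_eq_iff)

lemma other_in_same_part:
  assumes "v \<in> V"
  obtains w where "w \<in> V" "w \<noteq> v" "p w = p v"
proof -
  have "\<not> {w \<in> V. p w = p v} \<subseteq> {v}"
  proof
    assume "{w \<in> V. p w = p v} \<subseteq> {v}"
    then have "card {w \<in> V. p w = p v} \<le> 1" using card_mono[of "{v}"] by fastforce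
    then show False using part_size[OF assms] by simp
  qed
  then show ?thesis using that by blast
qed

lemma two_other_parts:
  obtains j k where "j \<in> p ` V" "k \<in> p ` V" "j \<noteq> k" "j \<noteq> l" "k \<noteq> l"
proof -
  have "card (p ` V) - card {l} \<le> card (p ` V - {l})" by (rule diff_card_le_card_Diff) simp
  then have "Suc 1 \<le> card (p ` V - {l})" using three_parts by simp
  then obtain j B where jB: "p ` V - {l} = insert j B" "j \<notin> B" "1 \<le> card B"
    unfolding card_le_Suc_iff by blast
  then obtain k where "k \<in> B" by fastforce
  then show ?thesis using that[of j k] jB by blast
qed

lemma induced_connected_if_meets_two_parts:
  assumes X: "X \<subseteq> V" and two: "meets_two_parts p X"
  shows "induced_connected E X"
  unfolding induced_connected_def
proof (intro allI impI)
  fix U assume closed: "\<forall>u\<in>X. \<forall>w\<in>X. {u, w} \<in> E \<longrightarrow> (u \<in> U \<longleftrightarrow> w \<in> U)"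
  have across: "u \<in> U \<longleftrightarrow> w \<in> U" if "u \<in> X" "w \<in> X" "p u \<noteq> p w" for u w
    using closed that X doubleton_in_edges_iff by blast
  have "u \<in> U \<longleftrightarrow> w \<in> U" if "u \<in> X" "w \<in> X" for u w
  proof (cases "p u = p w")
    case True
    text \<open>Vertices of the same part are joined through a vertex of another part.\<close>
    obtain z where "z \<in> X" "p z \<noteq> p u" using two unfolding meets_two_parts_def by metis
    then show ?thesis using across that True by metis
  qed (use across that in blast)
  then show "X \<subseteq> U \<or> X \<inter> U = {}" by blast
qed

lemma monochromatic_pair_if_not_induced_connected:
  assumes X: "X \<subseteq> V" and disconn: "\<not> induced_connected E X"
  obtains x y where "x \<in> X" "y \<in> X" "x \<noteq> y" "\<forall>z\<in>X. p z = p x"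
proof -
  have "\<not> meets_two_parts p X" using induced_connected_if_meets_two_parts X disconn by blast
  moreover have "\<exists>x\<in>X. \<exists>y\<in>X. x \<noteq> y"
  proof (rule ccontr)
    assume "\<not> ?thesis"
    then have "X = {} \<or> (\<exists>x. X = {x})" by blast
    then show False
      using disconn induced_connected_singleton unfolding induced_connected_def by auto
  qed
  ultimately show ?thesis using that unfolding meets_two_parts_def by blast
qed

lemma skel_adj_if_meets_two_parts:
  assumes sub: "A \<subseteq> V" "B \<subseteq> V"
    and two: "meets_two_parts p (sym_diff A B)"
      "meets_two_parts p (V - sym_diff A B)"
  shows "skel_adj (cut_polytope V E) (cut_vector E A) (cut_vector E B)"
proof (rule skel_adj_cut_vectors[OF edges_subset sub])
  let ?D = "sym_diff A B"
  obtain a b where ab: "a \<in> ?D" "b \<in> ?D" "p a \<noteq> p b"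
    using two(1) unfolding meets_two_parts_def by blast
  obtain c where c: "c \<in> V - ?D" using two(2) unfolding meets_two_parts_def by blast
  obtain u where u: "u \<in> ?D" "p u \<noteq> p c" using ab by metis
  have "{u, c} \<in> E" using u c sub doubleton_in_edges_iff by blast
  then show "cut_vector E A \<noteq> cut_vector E B"
    by (rule cut_vector_neqI) (use u c in auto)
  show "induced_connected E ?D" "induced_connected E (V - ?D)"
    using sub two by (auto intro: induced_connected_if_meets_two_parts)
qed

lemma switching_set_exists:
  assumes D: "D \<subseteq> V" and xy: "x \<in> D" "y \<in> D" "x \<noteq> y" and mono: "\<forall>z\<in>D. p z = p x"
  obtains T where "T \<subseteq> V" "meets_two_parts p T" "meets_two_parts p (V - T)"
    "meets_two_parts p (sym_diff T D)" "meets_two_parts p (V - sym_diff T D)"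
proof -
  obtain j k where jk: "j \<in> p ` V" "k \<in> p ` V" "j \<noteq> k" "j \<noteq> p x" "k \<noteq> p x"
    by (rule two_other_parts)
  obtain w c where wc: "w \<in> V" "p w = j" "c \<in> V" "p c = k" using jk by blast
  obtain w' where w': "w' \<in> V" "w' \<noteq> w" "p w' = j" using other_in_same_part[OF wc(1)] wc by metis
  have outside: "w \<notin> D" "w' \<notin> D" "c \<notin> D" using mono jk wc w' by metis+
  have "p y = p x" using mono xy by blast
  text \<open>Trading \<open>x\<close> for a vertex \<open>w\<close> of another part makes all four sets meet two parts.\<close>
  show ?thesis
  proof (rule that[of "{x, w}"])
    show "{x, w} \<subseteq> V" using D xy wc by auto
    show "meets_two_parts p {x, w}" by (rule meets_two_partsI[of x _ w]) (use wc jk in auto)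
    show "meets_two_parts p (V - {x, w})"
      by (rule meets_two_partsI[of w' _ c]) (use wc w' jk in auto)
    show "meets_two_parts p (sym_diff {x, w} D)"
      by (rule meets_two_partsI[of y _ w]) (use xy outside wc jk \<open>p y = p x\<close> in auto)
    show "meets_two_parts p (V - sym_diff {x, w} D)"
      by (rule meets_two_partsI[of x _ c]) (use D xy outside wc jk in auto)
  qed
qed

lemma cut_dist_le_2_if_monochromatic:
  assumes sub: "A \<subseteq> V" "B \<subseteq> V"
    and xy: "x \<in> sym_diff A B" "y \<in> sym_diff A B" "x \<noteq> y"
    and mono: "\<forall>z\<in>sym_diff A B. p z = p x"
  shows "skel_dist (cut_polytope V E) (cut_vector E A) (cut_vector E B) \<le> 2"
proof -
  let ?D = "sym_diff A B"
  obtain T where T: "T \<subseteq> V" "meets_two_parts p T" "meets_two_parts p (V - T)"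
    "meets_two_parts p (sym_diff T ?D)" "meets_two_parts p (V - sym_diff T ?D)"
    using switching_set_exists[of ?D x y] sub xy mono by blast
  define A' where "A' = sym_diff A T"
  have A': "A' \<subseteq> V" "sym_diff A A' = T" "sym_diff A' B = sym_diff T ?D"
    using sub T(1) unfolding A'_def by auto
  have "skel_adj (cut_polytope V E) (cut_vector E A) (cut_vector E A')"
    using skel_adj_if_meets_two_parts[OF sub(1) A'(1)] A'(2) T(2,3) by simp
  moreover have "skel_adj (cut_polytope V E) (cut_vector E A') (cut_vector E B)"
    using skel_adj_if_meets_two_parts[OF A'(1) sub(2)] A'(3) T(4,5) by simp
  ultimately show ?thesis using skel_dist_le_walk[OF skel_walk_adj_adj] by (simp add: enat_numeral)
qed

lemma cut_dist_le_2:
  assumes sub: "A \<subseteq> V" "B \<subseteq> V"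
  shows "skel_dist (cut_polytope V E) (cut_vector E A) (cut_vector E B) \<le> 2"
proof -
  let ?P = "cut_polytope V E" and ?v = "cut_vector E" and ?D = "sym_diff A B"
  show ?thesis
  proof (cases "induced_connected E ?D \<and> induced_connected E (V - ?D)")
    case conn: True
    show ?thesis
    proof (cases "?v A = ?v B")
      case True
      then show ?thesis
        using skel_dist_le_walk[OF skel_walk_refl, of ?P "?v A"] by (simp add: zero_enat_def[symmetric])
    next
      case False
      then have "skel_adj ?P (?v A) (?v B)" using skel_adj_cut_vectors[OF edges_subset sub] conn by simp
      then have "skel_dist ?P (?v A) (?v B) \<le> 1"
        using skel_dist_le_walk[OF skel_walk_adj] by (simp add: one_enat_def)
      then show ?thesis by (rule order_trans) simp
    qed
  next
    case False
    text \<open>Replacing \<open>B\<close> by \<open>V - B\<close> keeps the cut but swaps \<open>?D\<close> with its complement.\<close>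
    have complement: "sym_diff A (V - B) = V - ?D" using sub by auto
    consider "\<not> induced_connected E ?D" | "\<not> induced_connected E (V - ?D)" using False by blast
    then show ?thesis
    proof cases
      case 1
      have "?D \<subseteq> V" using sub by auto
      then obtain x y where "x \<in> ?D" "y \<in> ?D" "x \<noteq> y" "\<forall>z\<in>?D. p z = p x"
        by (rule monochromatic_pair_if_not_induced_connected[OF _ 1])
      then show ?thesis by (rule cut_dist_le_2_if_monochromatic[OF sub])
    next
      case 2
      obtain x y where xy: "x \<in> V - ?D" "y \<in> V - ?D" "x \<noteq> y" "\<forall>z\<in>V - ?D. p z = p x"
        by (rule monochromatic_pair_if_not_induced_connected[OF Diff_subset 2])
      have "skel_dist ?P (?v A) (?v (V - B)) \<le> 2"
        by (rule cut_dist_le_2_if_monochromatic[OF sub(1) Diff_subset xy[folded complement]])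
      then show ?thesis using cut_vector_complement[OF edges_subset] by simp
    qed
  qed
qed

lemma cut_dist_empty_same_part:
  assumes ab: "a \<in> V" "b \<in> V" "a \<noteq> b" "p a = p b"
  shows "skel_dist (cut_polytope V E) (cut_vector E {}) (cut_vector E {a, b}) = 2"
proof -
  let ?P = "cut_polytope V E" and ?v = "cut_vector E"
  obtain j k where "j \<in> p ` V" "k \<in> p ` V" "j \<noteq> k" "j \<noteq> p a" "k \<noteq> p a"
    by (rule two_other_parts)
  then obtain c where c: "c \<in> V" "p c \<noteq> p a" by blast
  have edges: "{a, c} \<in> E" "{b, c} \<in> E" "{a, b} \<notin> E"
    using ab c doubleton_in_edges_iff by auto
  have distinct: "a \<noteq> c" "b \<noteq> c" using ab c by auto
  have "skel_adj ?P (?v {}) (?v {a})"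
  proof (rule skel_adj_cut_vectors[OF edges_subset])
    show "?v {} \<noteq> ?v {a}" by (rule cut_vector_neqI[OF edges(1) distinct(1)]) (use distinct in auto)
    show "induced_connected E (V - sym_diff {} {a})"
      by (rule induced_connected_if_meets_two_parts) (use ab c distinct in \<open>auto intro!: meets_two_partsI[of b _ c]\<close>)
  qed (use ab induced_connected_singleton in auto)
  moreover have "skel_adj ?P (?v {a}) (?v {a, b})"
  proof (rule skel_adj_cut_vectors[OF edges_subset])
    show "?v {a} \<noteq> ?v {a, b}" by (rule cut_vector_neqI[OF edges(2) distinct(2)]) (use ab distinct in auto)
    have D: "sym_diff {a} {a, b} = {b}" using ab by auto
    show "induced_connected E (sym_diff {a} {a, b})"
      unfolding D by (rule induced_connected_singleton)
    show "induced_connected E (V - sym_diff {a} {a, b})"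
      unfolding D by (rule induced_connected_if_meets_two_parts)
        (use ab c distinct in \<open>auto intro!: meets_two_partsI[of a _ c]\<close>)
  qed (use ab in auto)
  ultimately have "skel_dist ?P (?v {}) (?v {a, b}) \<le> 2"
    using skel_dist_le_walk[OF skel_walk_adj_adj] by (simp add: enat_numeral)
  moreover have "2 \<le> skel_dist ?P (?v {}) (?v {a, b})"
  proof (rule skel_dist_ge_2)
    show "?v {} \<noteq> ?v {a, b}" by (rule cut_vector_neqI[OF edges(1) distinct(1)]) (use ab distinct in auto)
    show "\<not> skel_adj ?P (?v {}) (?v {a, b})"
      by (rule not_skel_adj_cut_vectors[OF edges_subset edges(3,1,2) ab(3) distinct])
  qed
  ultimately show ?thesis by (rule antisym)
qed

theorem skel_diameter_cut_polytope: "skel_diameter (cut_polytope V E) = 2"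
proof -
  obtain a where "a \<in> V" using three_parts by fastforce
  then obtain b where ab: "a \<in> V" "b \<in> V" "b \<noteq> a" "p b = p a" by (metis other_in_same_part)
  show ?thesis
  proof (rule skel_diameter_eqI)
    show "skel_dist (cut_polytope V E) x y \<le> 2"
      if "x extreme_point_of cut_polytope V E" "y extreme_point_of cut_polytope V E" for x y
      using that by (auto dest!: extreme_point_of_cut_polytopeD intro: cut_dist_le_2)
    show "cut_vector E {} extreme_point_of cut_polytope V E"
      "cut_vector E {a, b} extreme_point_of cut_polytope V E"
      using ab by (auto intro: extreme_point_of_cut_polytope)
    show "skel_dist (cut_polytope V E) (cut_vector E {}) (cut_vector E {a, b}) = 2"
      using ab by (intro cut_dist_empty_same_part) auto
  qed
qed

end

definition tripartite_part :: "'v set \<Rightarrow> 'v set \<Rightarrow> 'v \<Rightarrow> nat" where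
  "tripartite_part V1 V2 v = (if v \<in> V1 then 1 else if v \<in> V2 then 2 else 3)"

lemma tripartite_edges_eq_multipartite_edges:
  assumes "V1 \<inter> V2 = {}" "V1 \<inter> V3 = {}" "V2 \<inter> V3 = {}"
  shows "tripartite_edges V1 V2 V3 = multipartite_edges (V1 \<union> V2 \<union> V3) (tripartite_part V1 V2)"
proof (intro equalityI subsetI)
  let ?p = "tripartite_part V1 V2"
  fix e assume "e \<in> tripartite_edges V1 V2 V3"
  then obtain u w where uw: "e = {u, w}"
    "u \<in> V1 \<and> w \<in> V2 \<or> u \<in> V1 \<and> w \<in> V3 \<or> u \<in> V2 \<and> w \<in> V3"
    unfolding tripartite_edges_def by blast
  moreover have "?p u \<noteq> ?p w" using uw(2) assms unfolding tripartite_part_def by auto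
  ultimately show "e \<in> multipartite_edges (V1 \<union> V2 \<union> V3) ?p"
    unfolding multipartite_edges_def by blast
next
  let ?p = "tripartite_part V1 V2"
  fix e assume "e \<in> multipartite_edges (V1 \<union> V2 \<union> V3) ?p"
  then obtain u w where uw: "e = {u, w}" "u \<in> V1 \<union> V2 \<union> V3" "w \<in> V1 \<union> V2 \<union> V3" "?p u \<noteq> ?p w"
    unfolding multipartite_edges_def by blast
  then have "u \<in> V1 \<and> w \<in> V2 \<or> u \<in> V1 \<and> w \<in> V3 \<or> u \<in> V2 \<and> w \<in> V3 \<or>
      w \<in> V1 \<and> u \<in> V2 \<or> w \<in> V1 \<and> u \<in> V3 \<or> w \<in> V2 \<and> u \<in> V3"
    unfolding tripartite_part_def by (auto split: if_splits)
  moreover have "{u, w} = {w, u}" by blast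
  ultimately show "e \<in> tripartite_edges V1 V2 V3" unfolding tripartite_edges_def uw(1) by blast
qed

lemma complete_multipartite_tripartite:
  assumes "V1 \<inter> V2 = {}" "V1 \<inter> V3 = {}" "V2 \<inter> V3 = {}"
    and "card V1 \<ge> 2" "card V2 \<ge> 2" "card V3 \<ge> 2"
  shows "complete_multipartite (V1 \<union> V2 \<union> V3) (tripartite_part V1 V2)"
proof
  let ?V = "V1 \<union> V2 \<union> V3" and ?p = "tripartite_part V1 V2"
  have "V1 \<noteq> {}" "V2 \<noteq> {}" "V3 \<noteq> {}" using assms(4-6) by auto
  then have "?p ` ?V = {1, 2, 3}" using assms(1-3) unfolding tripartite_part_def by auto
  then show "3 \<le> card (?p ` ?V)" by simp
  fix v assume "v \<in> ?V"
  have "{w \<in> ?V. ?p w = ?p v} = (if v \<in> V1 then V1 else if v \<in> V2 then V2 else V3)"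
    using assms(1-3) unfolding tripartite_part_def by auto
  then show "2 \<le> card {w \<in> ?V. ?p w = ?p v}" using assms(4-6) by simp
qed

theorem theorem10:
  fixes V1 V2 V3 :: "'v::finite set"
  assumes "V1 \<inter> V2 = {}" and "V1 \<inter> V3 = {}" and "V2 \<inter> V3 = {}"
    and "card V1 \<ge> 2" and "card V2 \<ge> 2" and "card V3 \<ge> 2"
  shows "skel_diameter (cut_polytope (V1 \<union> V2 \<union> V3) (tripartite_edges V1 V2 V3)) = 2"
proof -
  interpret complete_multipartite "V1 \<union> V2 \<union> V3" "tripartite_part V1 V2"
    by (rule complete_multipartite_tripartite[OF assms])
  show ?thesis
    using skel_diameter_cut_polytope tripartite_edges_eq_multipartite_edges[OF assms(1-3)] by simp
qed

end
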